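(* Let $m\ge1$ and $l\ge1$ be integers and let $j\in\{1,\dots,m\}$. Then there exists a positive integer \[ D_{m,l}=\prod_{\substack{p\le \frac{m+1}{2}\\ p\text{ prime}}}p^{\nu_p},\qquad \nu_p\ge\left(\left\lfloor\frac jp\right\rfloor+\left\lfloor\frac{m-j}{p}\right\rfloor\right)v_p((l-1)!), \] such that $D_{m,l}^{-1}B^*_{k,j}(t)\in\mathbb{Z}[t]$ for all $k=0,1,\dots,m$.
   Context: $v_p$ is the $p$-adic valuation. For $k=0,\dots,m$ let $l^{(k)}_h=l$ for $h\ne k$ and $l^{(k)}_k=l-1$ ($h=0,\dots,m$), and $L=(m+1)l-1$. For $j,k\in\{0,\dots,m\}$ define $\sigma^{(k,j)}_i$ by $\prod_{h=0}^m(h-j-w)^{l^{(k)}_h}=\sum_{i=0}^L\sigma^{(k,j)}_iw^i$, and $B^*_{k,j}(t)=\frac{1}{(l-1)!}\sum_{i=0}^{L}t^{L-i}\,i!\,\sigma^{(k,j)}_i$. *)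

theory Defs
  imports "HOL-Computational_Algebra.Computational_Algebra"
begin

definition lexp :: "nat \<Rightarrow> nat \<Rightarrow> nat \<Rightarrow> nat" where
  "lexp l k h = (if h = k then l - 1 else l)"

definition bigL :: "nat \<Rightarrow> nat \<Rightarrow> nat" where
  "bigL m l = (m + 1) * l - 1"

definition sigma_poly :: "nat \<Rightarrow> nat \<Rightarrow> nat \<Rightarrow> nat \<Rightarrow> int poly" where
  "sigma_poly m l k j = (\<Prod>h\<in>{0..m}. [:int h - int j, -1:] ^ lexp l k h)"

definition sigma :: "nat \<Rightarrow> nat \<Rightarrow> nat \<Rightarrow> nat \<Rightarrow> nat \<Rightarrow> int" where
  "sigma m l k j i = coeff (sigma_poly m l k j) i"

definition Bstar :: "nat \<Rightarrow> nat \<Rightarrow> nat \<Rightarrow> nat \<Rightarrow> rat poly" where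
  "Bstar m l k j = smult (1 / fact (l - 1))
     (\<Sum>i\<in>{0..bigL m l}. monom (fact i * of_int (sigma m l k j i)) (bigL m l - i))"

end

theory Submission
  imports Defs
begin

text \<open>
  The n-th coefficient of B*(k,j) is i! sigma(k,j,i) / (l-1)! with i = L - n, so it suffices
  to show that (l-1)! D divides every i! sigma(k,j,i). Say that c divides a polynomial
  factorially if c divides i! times its i-th coefficient for every i. Since i! times a
  coefficient of a product is a binomial convolution of such terms, this property is
  multiplicative. In the product defining sigma, the factor (-w)^(l-1) for h = j contributes
  (l-1)!, and every factor (h - j - w)^a with h /= j and p dividing h - j contributes
  p^v_p(a!), where a >= l - 1; there are floor(j/p) + floor((m-j)/p) such h in {0..m}.
  The contributions of different primes are coprime, so they combine into D.
\<close>

lemma multiplicity_fact_Suc: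
  fixes p :: nat assumes "prime p"
  shows "multiplicity p (fact (Suc n) :: nat)
           = multiplicity p (Suc n) + multiplicity p (fact n :: nat)"
proof -
  have "(fact (Suc n) :: nat) = Suc n * fact n" by (metis fact_Suc of_nat_id)
  then show ?thesis
    using prime_elem_multiplicity_mult_distrib[of p "Suc n" "fact n"] assms
    by (simp del: fact_Suc)
qed

lemma multiplicity_fact:
  fixes p :: nat assumes p: "prime p"
  shows "multiplicity p (fact n :: nat) = n div p + multiplicity p (fact (n div p) :: nat)"
proof (induction n)
  case 0
  then show ?case by simp
next
  case (Suc n)
  have p1: "p > 1" using p prime_gt_1_nat by blast
  show ?case
  proof (cases "p dvd Suc n")
    case False
    then have "Suc n div p = n div p"
      by (metis div_Suc dvd_eq_mod_eq_0)
    then show ?thesis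
      using False Suc multiplicity_fact_Suc[OF p, of n] by (simp add: not_dvd_imp_multiplicity_0)
  next
    case True
    then obtain q where q: "Suc n = p * Suc q"
      by (metis dvd_def mult_0_right nat.distinct(1) not0_implies_Suc)
    have "Suc n div p = Suc q" using q p1 by simp
    moreover have "n div p = q"
      using q p1 by (intro div_nat_eqI) (auto simp: algebra_simps)
    moreover have "multiplicity p (Suc n) = Suc (multiplicity p (Suc q))"
      unfolding q using p1 multiplicity_times_same[of "Suc q" p] by auto
    ultimately show ?thesis
      using Suc multiplicity_fact_Suc[OF p, of n] multiplicity_fact_Suc[OF p, of q] by simp
  qed
qed

lemma multiplicity_fact_le:
  fixes p :: nat assumes p: "prime p"
  shows "multiplicity p (fact n :: nat) \<le> n"
proof (induction n rule: less_induct)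
  case (less n)
  show ?case
  proof (cases "n = 0")
    case False
    have p1: "p > 1" using p prime_gt_1_nat by blast
    have "n div p * 2 \<le> n div p * p" using p1 by simp
    also have "\<dots> \<le> n" by (rule div_times_less_eq_dividend)
    finally have "n div p + n div p \<le> n" by simp
    moreover have "n div p < n" using False p1 by simp
    ultimately show ?thesis using multiplicity_fact[OF p, of n] less by fastforce
  qed simp
qed

definition dvd_fact_coeffs :: "'a::{comm_semiring_1, semiring_char_0} \<Rightarrow> 'a poly \<Rightarrow> bool" where
  "dvd_fact_coeffs c F \<longleftrightarrow> (\<forall>i. c dvd fact i * coeff F i)"

lemma dvd_fact_coeffs_one: "dvd_fact_coeffs 1 F"
  by (simp add: dvd_fact_coeffs_def)

lemma dvd_fact_coeffs_mult:
  assumes "dvd_fact_coeffs a F" "dvd_fact_coeffs b G"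
  shows "dvd_fact_coeffs (a * b) (F * G)"
  unfolding dvd_fact_coeffs_def
proof
  fix i
  have "fact i * coeff (F * G) i = (\<Sum>u\<le>i. fact i * (coeff F u * coeff G (i - u)))"
    by (simp add: coeff_mult sum_distrib_left)
  also have "\<dots> = (\<Sum>u\<le>i. of_nat (i choose u) *
                   ((fact u * coeff F u) * (fact (i - u) * coeff G (i - u))))"
  proof (rule sum.cong[OF refl])
    fix u assume "u \<in> {..i}"
    then have "fact i = (of_nat (fact u * fact (i - u) * (i choose u)) :: 'a)"
      by (metis atMost_iff binomial_fact_lemma of_nat_fact)
    then show "fact i * (coeff F u * coeff G (i - u)) = of_nat (i choose u) *
                 ((fact u * coeff F u) * (fact (i - u) * coeff G (i - u)))"
      by (simp add: algebra_simps)
  qed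
  also have "a * b dvd \<dots>"
  proof (rule dvd_sum)
    fix u
    have "a * b dvd (fact u * coeff F u) * (fact (i - u) * coeff G (i - u))"
      using assms unfolding dvd_fact_coeffs_def by (intro mult_dvd_mono) auto
    then show "a * b dvd of_nat (i choose u) *
                 ((fact u * coeff F u) * (fact (i - u) * coeff G (i - u)))"
      by (rule dvd_mult)
  qed
  finally show "a * b dvd fact i * coeff (F * G) i" .
qed

lemma dvd_fact_coeffs_prod:
  assumes "\<And>h. h \<in> A \<Longrightarrow> dvd_fact_coeffs (c h) (F h)"
  shows "dvd_fact_coeffs (\<Prod>h\<in>A. c h) (\<Prod>h\<in>A. F h)"
  using assms
  by (induction A rule: infinite_finite_induct)
     (simp_all add: dvd_fact_coeffs_one dvd_fact_coeffs_mult)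

lemma dvd_fact_coeffs_power_mono:
  assumes "dvd_fact_coeffs c (F ^ a)" "a \<le> b"
  shows "dvd_fact_coeffs c (F ^ b)"
proof -
  have "dvd_fact_coeffs (c * 1) (F ^ a * F ^ (b - a))"
    using assms(1) dvd_fact_coeffs_one by (rule dvd_fact_coeffs_mult)
  then show ?thesis using assms(2) by (simp add: power_add[symmetric])
qed

lemma coeff_linear_power_eq_0:
  assumes "a < i" shows "coeff ([:b, c:] ^ a) i = 0"
proof (rule coeff_eq_0)
  have "degree ([:b, c:] ^ a) \<le> degree [:b, c:] * a" by (rule degree_power_le)
  then show "degree ([:b, c:] ^ a) < i" using assms by (simp split: if_split_asm)
qed

lemma dvd_fact_coeffs_monomial_power: "dvd_fact_coeffs (fact a) ([:0, c:] ^ a)"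
  unfolding dvd_fact_coeffs_def
proof
  fix i
  show "fact a dvd fact i * coeff ([:0, c:] ^ a) i"
    by (cases i a rule: linorder_cases)
       (simp_all add: coeff_linear_poly_power coeff_linear_power_eq_0 power_0_left)
qed

text \<open>Uses v_p((a-i)!) <= a - i: the p-adic loss from the factor 1/(a-i)! is made up by p^(a-i).\<close>
lemma dvd_fact_coeffs_linear_power:
  fixes p :: nat and s c :: int assumes p: "prime p"
  shows "dvd_fact_coeffs (int p ^ multiplicity p (fact a :: nat)) ([:int p * s, c:] ^ a)"
  unfolding dvd_fact_coeffs_def
proof
  fix i
  show "int p ^ multiplicity p (fact a :: nat) dvd fact i * coeff ([:int p * s, c:] ^ a) i"
  proof (cases "i \<le> a")
    case True
    define X where "X = fact i * (a choose i) * p ^ (a - i)"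
    have "X \<noteq> 0" using p True by (auto simp: X_def)
    then have "multiplicity p (X * fact (a - i))
                 = multiplicity p X + multiplicity p (fact (a - i) :: nat)"
      using p by (simp add: prime_elem_multiplicity_mult_distrib del: fact_Suc)
    moreover have "X * fact (a - i) = fact a * p ^ (a - i)"
      unfolding X_def using binomial_fact_lemma[OF True] by (simp add: algebra_simps)
    moreover have "multiplicity p (fact a * p ^ (a - i))
                     = multiplicity p (fact a :: nat) + (a - i)"
      using p by (simp add: prime_elem_multiplicity_mult_distrib prime_gt_0_nat del: fact_Suc)
    ultimately have "multiplicity p X + multiplicity p (fact (a - i) :: nat)
                 = multiplicity p (fact a :: nat) + (a - i)" by simp
    then have "multiplicity p (fact a :: nat) \<le> multiplicity p X"
      using multiplicity_fact_le[OF p, of "a - i"] by linarith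
    then have "int (p ^ multiplicity p (fact a :: nat)) dvd int X"
      by (simp only: of_nat_dvd_iff multiplicity_dvd')
    then have "int p ^ multiplicity p (fact a :: nat) dvd
                 fact i * int (a choose i) * int p ^ (a - i)"
      by (simp add: X_def)
    then have "int p ^ multiplicity p (fact a :: nat) dvd
                 (fact i * int (a choose i) * int p ^ (a - i)) * (c ^ i * s ^ (a - i))"
      by (rule dvd_mult2)
    then show ?thesis using True
      by (simp add: coeff_linear_poly_power algebra_simps)
  qed (simp add: coeff_linear_power_eq_0)
qed

lemma dvd_fact_coeffs_prod_punctured:
  assumes "finite A" "j \<in> A" "S \<subseteq> A - {j}"
    and "dvd_fact_coeffs a (F j)" "\<And>h. h \<in> S \<Longrightarrow> dvd_fact_coeffs b (F h)"
  shows "dvd_fact_coeffs (a * b ^ card S) (\<Prod>h\<in>A. F h)"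
proof -
  have "finite S" "j \<notin> S" using assms(1,3) finite_subset by auto
  have "(\<Prod>h\<in>A. F h) = (F j * (\<Prod>h\<in>S. F h)) * (\<Prod>h\<in>A - insert j S. F h)"
    using assms(1-3) \<open>finite S\<close> \<open>j \<notin> S\<close>
    by (subst prod.subset_diff[of "insert j S"]) (auto simp: ac_simps)
  moreover have "dvd_fact_coeffs ((a * (\<Prod>h\<in>S. b)) * 1)
                   ((F j * (\<Prod>h\<in>S. F h)) * (\<Prod>h\<in>A - insert j S. F h))"
    using assms(4,5) by (intro dvd_fact_coeffs_mult dvd_fact_coeffs_prod dvd_fact_coeffs_one)
  ultimately show ?thesis by simp
qed

lemma lexp_ge: "l - 1 \<le> lexp l k h"
  by (simp add: lexp_def)

text \<open>
  The h in {0..m} other than j with p dividing h - j are j + p t for t ranging over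
  {-(j div p)..(m - j) div p} without 0.
\<close>
lemma dvd_fact_coeffs_sigma_poly:
  fixes p :: nat assumes p: "prime p" and "j \<le> m"
  shows "dvd_fact_coeffs
           (fact (l - 1) * int p ^ ((j div p + (m - j) div p) * multiplicity p (fact (l - 1) :: nat)))
           (sigma_poly m l k j)"
proof -
  define T where "T = {- int (j div p)..int ((m - j) div p)} - {0}"
  define g where "g t = nat (int j + int p * t)" for t
  have p0: "p > 0" using p prime_gt_0_nat by blast
  have g: "int (g t) = int j + int p * t" "g t \<in> {0..m} - {j}" if "t \<in> T" for t
  proof -
    have lo: "int p * (- int (j div p)) \<le> int p * t"
      and hi: "int p * t \<le> int p * int ((m - j) div p)"
      using that unfolding T_def by (intro mult_left_mono; simp)+
    have "int p * int (j div p) \<le> int j" "int p * int ((m - j) div p) \<le> int m - int j"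
      using \<open>j \<le> m\<close> by (simp_all flip: of_nat_mult of_nat_diff)
    moreover have "int p * t \<noteq> 0" using that p0 by (simp add: T_def)
    ultimately have "int (g t) = int j + int p * t" "int (g t) \<le> int m" "int (g t) \<noteq> int j"
      using lo hi unfolding g_def by linarith+
    then show "int (g t) = int j + int p * t" "g t \<in> {0..m} - {j}" by auto
  qed
  have "inj_on g T"
    using g(1) p0 by (intro inj_onI) (metis add_left_cancel mult_cancel_left of_nat_eq_0_iff neq0_conv)
  then have card: "card (g ` T) = j div p + (m - j) div p"
    by (simp add: card_image T_def card_Diff_singleton)
  have "dvd_fact_coeffs (fact (l - 1) * (int p ^ multiplicity p (fact (l - 1) :: nat)) ^ card (g ` T))
          (\<Prod>h\<in>{0..m}. [:int h - int j, -1:] ^ lexp l k h)"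
  proof (rule dvd_fact_coeffs_prod_punctured)
    show "dvd_fact_coeffs (fact (l - 1)) ([:int j - int j, -1:] ^ lexp l k j)"
      using dvd_fact_coeffs_power_mono[OF dvd_fact_coeffs_monomial_power lexp_ge] by simp
    show "dvd_fact_coeffs (int p ^ multiplicity p (fact (l - 1) :: nat))
            ([:int h - int j, -1:] ^ lexp l k h)" if "h \<in> g ` T" for h
      using that g(1) dvd_fact_coeffs_power_mono[OF dvd_fact_coeffs_linear_power[OF p] lexp_ge]
      by auto
  qed (use g(2) \<open>j \<le> m\<close> in auto)
  then show ?thesis by (simp add: sigma_poly_def card power_mult mult.commute)
qed

lemma prod_dvd_if_pairwise_coprime:
  fixes f :: "'b \<Rightarrow> 'a::semiring_gcd"
  assumes "\<And>a. a \<in> A \<Longrightarrow> f a dvd x"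
    and "\<And>a b. a \<in> A \<Longrightarrow> b \<in> A \<Longrightarrow> a \<noteq> b \<Longrightarrow> coprime (f a) (f b)"
  shows "prod f A dvd x"
  using assms
proof (induction A rule: infinite_finite_induct)
  case (insert a A)
  then have "coprime (f a) (prod f A)" by (intro prod_coprime_right) auto
  with insert show ?case by (simp add: divides_mult)
qed simp_all

lemma dvd_fact_coeffs_sigma_poly_primes:
  assumes "\<And>p. p \<in> P \<Longrightarrow> prime p" and "j \<le> m"
  shows "dvd_fact_coeffs
           (fact (l - 1) *
            int (\<Prod>p\<in>P. p ^ ((j div p + (m - j) div p) * multiplicity p (fact (l - 1) :: nat))))
           (sigma_poly m l k j)"
  unfolding dvd_fact_coeffs_def
proof
  fix i
  define e where "e p = (j div p + (m - j) div p) * multiplicity p (fact (l - 1) :: nat)" for p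
  have per_prime: "fact (l - 1) * int p ^ e p dvd fact i * coeff (sigma_poly m l k j) i"
    if "prime p" for p
    using dvd_fact_coeffs_sigma_poly[OF that \<open>j \<le> m\<close>] by (simp add: dvd_fact_coeffs_def e_def)
  obtain y where y: "fact i * coeff (sigma_poly m l k j) i = fact (l - 1) * y"
    using per_prime[OF two_is_prime_nat] by (meson dvd_mult_left dvdE)
  have "(\<Prod>p\<in>P. int p ^ e p) dvd y"
  proof (rule prod_dvd_if_pairwise_coprime)
    show "int p ^ e p dvd y" if "p \<in> P" for p
      using per_prime[OF assms(1)[OF that]] by (simp add: y)
    show "coprime (int p ^ e p) (int q ^ e q)" if "p \<in> P" "q \<in> P" "p \<noteq> q" for p q
    proof -
      have "coprime p q" using that assms(1) primes_coprime by blast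
      then show ?thesis by simp
    qed
  qed
  then show "fact (l - 1) * int (\<Prod>p\<in>P. p ^ e p) dvd fact i * coeff (sigma_poly m l k j) i"
    by (simp add: y)
qed

lemma coeff_Bstar:
  "coeff (Bstar m l k j) n =
     (if n \<le> bigL m l
      then of_int (fact (bigL m l - n) * sigma m l k j (bigL m l - n)) / fact (l - 1) else 0)"
proof -
  define L where "L = bigL m l"
  have "coeff (Bstar m l k j) n =
          (\<Sum>i\<in>{0..L}. if L - i = n then fact i * of_int (sigma m l k j i) else 0) / fact (l - 1)"
    unfolding Bstar_def L_def by (simp add: coeff_sum)
  also have "(\<Sum>i\<in>{0..L}. if L - i = n then fact i * of_int (sigma m l k j i) else (0::rat))
     = (\<Sum>i\<in>{i\<in>{0..L}. L - i = n}. fact i * of_int (sigma m l k j i))"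
    by (rule sum.inter_filter[symmetric]) simp
  also have "{i\<in>{0..L}. L - i = n} = (if n \<le> L then {L - n} else {})" by auto
  finally show ?thesis unfolding L_def[symmetric] by auto
qed

theorem theorem6p2:
  fixes m l j :: nat
  assumes "m \<ge> 1" and "l \<ge> 1" and "j \<in> {1..m}"
  shows "\<exists>(D::nat) (\<nu>::nat \<Rightarrow> nat).
           D > 0 \<and>
           D = (\<Prod>p\<in>{p. prime p \<and> real p \<le> real (m + 1) / 2}. p ^ \<nu> p) \<and>
           (\<forall>p. prime p \<and> real p \<le> real (m + 1) / 2 \<longrightarrow>
               \<nu> p \<ge> (j div p + (m - j) div p) * multiplicity p (fact (l - 1) :: nat)) \<and>
           (\<forall>k\<in>{0..m}. \<forall>n. coeff (Bstar m l k j) n / of_nat D \<in> \<int>)"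
proof -
  define P where "P = {p. prime p \<and> real p \<le> real (m + 1) / 2}"
  define \<nu> where "\<nu> p = (j div p + (m - j) div p) * multiplicity p (fact (l - 1) :: nat)" for p
  define D where "D = (\<Prod>p\<in>P. p ^ \<nu> p)"
  have "D > 0" unfolding D_def P_def by (intro prod_pos) (auto simp: prime_gt_0_nat)
  have integral: "coeff (Bstar m l k j) n / of_nat D \<in> \<int>" for k n
  proof (cases "n \<le> bigL m l")
    case True
    define i where "i = bigL m l - n"
    have "dvd_fact_coeffs (fact (l - 1) * int D) (sigma_poly m l k j)"
      unfolding D_def \<nu>_def
      using assms(3) by (intro dvd_fact_coeffs_sigma_poly_primes) (auto simp: P_def)
    then have "int (fact (l - 1) * D) dvd fact i * sigma m l k j i"
      by (simp add: dvd_fact_coeffs_def sigma_def)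
    then obtain c where c: "fact i * sigma m l k j i = int (fact (l - 1) * D) * c" ..
    have "coeff (Bstar m l k j) n / of_nat D
            = of_int (fact i * sigma m l k j i) / fact (l - 1) / of_nat D"
      using True by (simp add: coeff_Bstar i_def)
    also have "\<dots> = of_int c"
      unfolding c using \<open>D > 0\<close> by (simp add: field_simps)
    finally have "coeff (Bstar m l k j) n / of_nat D = of_int c" .
    then show ?thesis by simp
  qed (simp add: coeff_Bstar)
  show ?thesis
    by (rule exI[of _ D], rule exI[of _ \<nu>])
       (use \<open>D > 0\<close> integral in \<open>auto simp: D_def P_def \<nu>_def\<close>)
qed

end
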